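(* Let $f:\{0,1\}^n\to\{0,1\}^m$ be a Boolean function which is either constant or balanced. For each $i=0,\dots,m-1$ run $\mathrm{GPK}(\mathbf{e}_i)$ with output $\delta_i\in\{0,1\}^n$, and define $\boldsymbol\lambda=\lambda_{m-1}\dots\lambda_0\in\{0,1\}^m$ by $\lambda_i=0$ if $\delta_i=\mathbf{0}$ and $\lambda_i=1$ otherwise. Then with certainty: if $f$ is constant, $\boldsymbol\lambda=\mathbf{0}$; if $f$ is balanced with its two values $\mathbf{f}_1\neq\mathbf{f}_2$, then $\boldsymbol\lambda=\mathbf{f}_1\oplus\mathbf{f}_2$. In particular, the set of values of $f$ equals $\{f(\mathbf{0}),\,f(\mathbf{0})\oplus\boldsymbol\lambda\}$, so the possible values of $f$ are determined by these runs together with one classical evaluation of $f(\mathbf{0})$.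
   Context: A function $f:\{0,1\}^n\to\{0,1\}^m$ is constant if $f(\mathbf{x})$ is the same for all $\mathbf{x}$, and balanced if it takes exactly two distinct values, each on exactly half of the inputs. Bits are indexed from the right starting at $0$ and $\mathbf{e}_i=0^{m-1-i}\,1\,0^{i}\in\{0,1\}^m$. For strings $\mathbf{y},\mathbf{z}$ of equal length, $\mathbf{y}\oplus\mathbf{z}$ is bitwise XOR and $\mathbf{y}\cdot\mathbf{z}=\bigoplus_j y_jz_j$. $\mathbf{U}_f$ is the unitary with $\mathbf{U}_f(\ket{\mathbf{x}}_n\otimes\ket{\mathbf{z}}_m)=\ket{\mathbf{x}}_n\otimes\ket{\mathbf{z}\oplus f(\mathbf{x})}_m$; $\mathbf{H}_k=\mathbf{H}^{\otimes k}$ with $\mathbf{H}$ the one-qubit Hadamard gate. The algorithm $\mathrm{GPK}(\mathbf{y})$ for $\mathbf{y}\in\{0,1\}^m$: start in $\ket{\mathbf{0}}_n\otimes\ket{\mathbf{0}}_m$; apply Pauli $\mathbf{X}$ gates to get $\ket{\mathbf{0}}_n\otimes\ket{\mathbf{y}}_m$; apply $\mathbf{H}_{n+m}$; apply $\mathbf{U}_f$; apply $\mathbf{H}_n$ to the first register; measure the first register in the computational basis, giving the output in $\{0,1\}^n$. *)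

theory Defs
  imports Complex_Main
begin

text \<open>Bit strings in {0,1}^k are encoded as natural numbers below 2^k; bit j (indexed
from the right, starting at 0) of the string x is bit x j. XOR is bitwise xor on nat,
e_i is 2^i and the all-zero string is 0.\<close>

definition bdot :: "nat \<Rightarrow> nat \<Rightarrow> nat \<Rightarrow> bool" where
  "bdot k y z = odd (card {j. j < k \<and> bit y j \<and> bit z j})"

definition dsign :: "nat \<Rightarrow> nat \<Rightarrow> nat \<Rightarrow> complex" where
  "dsign k y z = (if bdot k y z then -1 else 1)"

text \<open>States of n+m qubits: amplitude functions on pairs (x,z), x < 2^n (first register),
z < 2^m (second register), i.e. amplitude of the basis vector |x>_n (x) |z>_m.\<close>

type_synonym state = "nat \<times> nat \<Rightarrow> complex"

definition basis_state :: "nat \<Rightarrow> nat \<Rightarrow> state" where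
  "basis_state x0 z0 = (\<lambda>(x,z). if x = x0 \<and> z = z0 then 1 else 0)"

definition H_all :: "nat \<Rightarrow> nat \<Rightarrow> state \<Rightarrow> state" where
  "H_all n m \<psi> = (\<lambda>(x,z). (\<Sum>x'<2^n. \<Sum>z'<2^m.
      dsign n x x' * dsign m z z' * \<psi> (x',z')) / complex_of_real (sqrt (2^(n+m))))"

definition U_f :: "(nat \<Rightarrow> nat) \<Rightarrow> state \<Rightarrow> state" where
  "U_f f \<psi> = (\<lambda>(x,z). \<psi> (x, xor z (f x)))"

definition H_first :: "nat \<Rightarrow> state \<Rightarrow> state" where
  "H_first n \<psi> = (\<lambda>(x,z). (\<Sum>x'<2^n. dsign n x x' * \<psi> (x',z)) / complex_of_real (sqrt (2^n)))"

text \<open>Final state of GPK(y) before measurement (the X gates turn |0>|0> into |0>|y>).\<close>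
definition gpk_state :: "nat \<Rightarrow> nat \<Rightarrow> (nat \<Rightarrow> nat) \<Rightarrow> nat \<Rightarrow> state" where
  "gpk_state n m f y = H_first n (U_f f (H_all n m (basis_state 0 y)))"

definition gpk_prob :: "nat \<Rightarrow> nat \<Rightarrow> (nat \<Rightarrow> nat) \<Rightarrow> nat \<Rightarrow> nat \<Rightarrow> real" where
  "gpk_prob n m f y \<delta> = (\<Sum>z<2^m. (cmod (gpk_state n m f y (\<delta>, z)))^2)"

definition gpk_event :: "nat \<Rightarrow> nat \<Rightarrow> (nat \<Rightarrow> nat) \<Rightarrow> nat \<Rightarrow> (nat \<Rightarrow> bool) \<Rightarrow> real" where
  "gpk_event n m f y P = (\<Sum>\<delta>\<in>{\<delta>. \<delta> < 2^n \<and> P \<delta>}. gpk_prob n m f y \<delta>)"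

definition is_constant :: "nat \<Rightarrow> (nat \<Rightarrow> nat) \<Rightarrow> bool" where
  "is_constant n f = (\<forall>x<2^n. \<forall>x'<2^n. f x = f x')"

definition balanced_with :: "nat \<Rightarrow> (nat \<Rightarrow> nat) \<Rightarrow> nat \<Rightarrow> nat \<Rightarrow> bool" where
  "balanced_with n f a b = (a \<noteq> b \<and> f ` {..<2^n} = {a, b} \<and>
      2 * card {x. x < 2^n \<and> f x = a} = 2^n \<and> 2 * card {x. x < 2^n \<and> f x = b} = 2^n)"

definition is_balanced :: "nat \<Rightarrow> (nat \<Rightarrow> nat) \<Rightarrow> bool" where
  "is_balanced n f = (\<exists>a b. balanced_with n f a b)"

end

theory Submission
  imports Defs
begin

text \<open>GPK(e_i) is the Deutsch-Jozsa circuit for the i-th output bit f_i of f: after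
the Hadamard transform the second register carries the phase (-1)^(z_i), so U_f multiplies
the amplitude of x by (-1)^(f_i(x)) (phase kickback). Hence outcome d has probability
W(d)^2 / 4^n, where W(d) = \<Sum>x (-1)^(d\<cdot>x + f_i(x)) is the Walsh coefficient of f_i,
and by Parseval these probabilities sum to 1. Since W(0) = 2^n - 2 |f_i^(-1)(1)|, the
outcome is 0 with certainty when f_i is constant and nonzero with certainty when f_i is
balanced. For balanced f with values f1, f2 the bit f_i is constant exactly when f1 and f2
agree in bit i, so the runs read off f1 \<oplus> f2 bit by bit.\<close>

lemma bit_imp_less_of_less_exp:
  fixes w :: nat
  assumes "w < 2 ^ n" and "bit w j"
  shows "j < n"
  using assms by (metis bit_take_bit_iff take_bit_nat_eq_self)

lemma nat_eq_of_low_bits_eq: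
  fixes x y :: nat
  assumes "x < 2 ^ m" "y < 2 ^ m" and "\<forall>i<m. bit x i = bit y i"
  shows "x = y"
  using assms by (metis bit_eqI bit_imp_less_of_less_exp)

lemma xor_less_exp:
  fixes a b :: nat
  assumes "a < 2 ^ m" "b < 2 ^ m"
  shows "xor a b < 2 ^ m"
  using assms by (metis take_bit_nat_eq_self_iff take_bit_xor)

lemma xor_eq_0_iff_eq: "xor x y = (0::nat) \<longleftrightarrow> x = y"
  by (metis bit_xor_iff bit_eqI bit_0_eq xor_self_eq)

definition bsign :: "bool \<Rightarrow> real" where
  "bsign b = (if b then -1 else 1)"

lemma bsign_squared [simp]: "(bsign b)\<^sup>2 = 1"
  by (simp add: bsign_def)

definition walsh_char :: "nat \<Rightarrow> nat \<Rightarrow> nat \<Rightarrow> real" where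
  "walsh_char k y z = bsign (bdot k y z)"

lemma dsign_eq_walsh_char: "dsign k y z = of_real (walsh_char k y z)"
  by (simp add: dsign_def walsh_char_def bsign_def)

lemma walsh_char_eq_prod: "walsh_char k y z = (\<Prod>j<k. bsign (bit y j \<and> bit z j))"
proof -
  have "(\<Prod>j<k. bsign (bit y j \<and> bit z j)) = (\<Prod>j\<in>{j\<in>{..<k}. bit y j \<and> bit z j}. -1)"
    unfolding bsign_def by (rule prod.inter_filter[symmetric]) simp
  also have "{j\<in>{..<k}. bit y j \<and> bit z j} = {j. j < k \<and> bit y j \<and> bit z j}"
    by auto
  finally show ?thesis
    by (simp add: walsh_char_def bdot_def bsign_def minus_one_power_iff)
qed

lemma bdot_exp:
  assumes "i < m"
  shows "bdot m w (2 ^ i) = bit w i"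
proof -
  have "{j. j < m \<and> bit w j \<and> bit ((2::nat) ^ i) j} = (if bit w i then {i} else {})"
    using assms by (auto simp: bit_exp_iff)
  then show ?thesis
    by (simp add: bdot_def)
qed

lemma walsh_char_zero_left [simp]: "walsh_char k 0 z = 1"
  by (simp add: walsh_char_def bdot_def bsign_def)

lemma walsh_char_zero_right [simp]: "walsh_char k y 0 = 1"
  by (simp add: walsh_char_def bdot_def bsign_def)

lemma walsh_char_mult: "walsh_char k d x * walsh_char k d x' = walsh_char k d (xor x x')"
  unfolding walsh_char_eq_prod prod.distrib[symmetric]
  by (rule prod.cong) (auto simp: bsign_def bit_xor_iff)

lemma sum_lessThan_double: "sum g {..<2 * (N::nat)} = (\<Sum>k<N. g (2 * k) + g (2 * k + 1))"
  by (induction N) (simp_all add: lessThan_Suc ac_simps)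

lemma sum_bitstrings_prod:
  fixes h :: "nat \<Rightarrow> bool \<Rightarrow> 'a::comm_semiring_1"
  shows "(\<Sum>d::nat<2 ^ n. \<Prod>j<n. h j (bit d j)) = (\<Prod>j<n. h j False + h j True)"
proof (induction n arbitrary: h)
  case 0
  then show ?case by (simp add: lessThan_Suc)
next
  case (Suc n)
  have "(\<Sum>d::nat<2 ^ Suc n. \<Prod>j<Suc n. h j (bit d j))
      = (\<Sum>k::nat<2 ^ n. (h 0 False + h 0 True) * (\<Prod>j<n. h (Suc j) (bit k j)))"
    unfolding power_Suc sum_lessThan_double prod.lessThan_Suc_shift
    by (simp add: bit_Suc bit_0 algebra_simps del: bit_0_eq)
  also have "\<dots> = (\<Prod>j<Suc n. h j False + h j True)"
    using Suc.IH[of "\<lambda>j. h (Suc j)"]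
    by (simp add: prod.lessThan_Suc_shift del: prod.lessThan_Suc flip: sum_distrib_left)
  finally show ?case .
qed

lemma sum_walsh_char:
  assumes "w < 2 ^ n"
  shows "(\<Sum>d<2 ^ n. walsh_char n d w) = (if w = 0 then 2 ^ n else 0)"
proof -
  have "(\<Sum>d<2 ^ n. walsh_char n d w) = (\<Prod>j<n. bsign False + bsign (bit w j))"
    unfolding walsh_char_eq_prod by (subst sum_bitstrings_prod) simp
  also have "\<dots> = (\<Prod>j<n. if bit w j then 0 else 2)"
    by (rule prod.cong) (auto simp: bsign_def)
  also have "\<dots> = (if w = 0 then 2 ^ n else 0)"
    using nat_eq_of_low_bits_eq[OF assms, of 0] by auto
  finally show ?thesis .
qed

lemma walsh_parseval:
  "(\<Sum>d<2 ^ n. (\<Sum>x<2 ^ n. walsh_char n d x * s x)\<^sup>2) = 2 ^ n * (\<Sum>x<2 ^ n. (s x)\<^sup>2)"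
proof -
  have square: "(\<Sum>x<2 ^ n. walsh_char n d x * s x)\<^sup>2
      = (\<Sum>x<2 ^ n. \<Sum>x'<2 ^ n. s x * s x' * walsh_char n d (xor x x'))" for d
  proof -
    have "walsh_char n d x * s x * (walsh_char n d x' * s x') = s x * s x' * walsh_char n d (xor x x')"
      for x x' by (simp only: walsh_char_mult[symmetric] mult_ac)
    then show ?thesis by (simp only: power2_eq_square sum_product)
  qed
  have "(\<Sum>d<2 ^ n. (\<Sum>x<2 ^ n. walsh_char n d x * s x)\<^sup>2)
      = (\<Sum>x<2 ^ n. \<Sum>x'<2 ^ n. s x * s x' * (\<Sum>d<2 ^ n. walsh_char n d (xor x x')))"
    unfolding square sum_distrib_left
    by (subst sum.swap, rule sum.cong[OF refl], rule sum.swap)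
  also have "\<dots> = (\<Sum>x<2 ^ n. \<Sum>x'<2 ^ n. if x = x' then 2 ^ n * (s x)\<^sup>2 else 0)"
    by (intro sum.cong refl)
       (simp add: sum_walsh_char xor_less_exp xor_eq_0_iff_eq power2_eq_square)
  also have "\<dots> = 2 ^ n * (\<Sum>x<2 ^ n. (s x)\<^sup>2)"
    by (simp add: sum_distrib_left)
  finally show ?thesis .
qed

definition walsh_coeff :: "nat \<Rightarrow> (nat \<Rightarrow> bool) \<Rightarrow> nat \<Rightarrow> real" where
  "walsh_coeff n g d = (\<Sum>x<2 ^ n. walsh_char n d x * bsign (g x))"

lemma walsh_coeff_zero: "walsh_coeff n g 0 = 2 ^ n - 2 * real (card {x. x < 2 ^ n \<and> g x})"
proof -
  let ?T = "{x. x < 2 ^ n \<and> g x}" and ?F = "{x. x < 2 ^ n \<and> \<not> g x}"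
  have split: "?T \<union> ?F = {..<2 ^ n}" "?T \<inter> ?F = {}"
    by auto
  have "real (card ?T) + real (card ?F) = 2 ^ n"
    using card_Un_disjoint[of ?T ?F] split by (simp flip: of_nat_add)
  moreover have "walsh_coeff n g 0 = real (card ?F) - real (card ?T)"
    unfolding walsh_coeff_def split(1)[symmetric] by (subst sum.union_disjoint) (auto simp: bsign_def)
  ultimately show ?thesis
    by linarith
qed

lemma H_all_basis_state:
  assumes "x0 < 2 ^ n" and "y < 2 ^ m"
  shows "H_all n m (basis_state x0 y) (x, z)
    = dsign n x x0 * dsign m z y / of_real (sqrt (2 ^ (n + m)))"
proof -
  have "(\<Sum>x'<2 ^ n. \<Sum>z'<2 ^ m. dsign n x x' * dsign m z z' * basis_state x0 y (x', z'))
      = (\<Sum>x'::nat<2 ^ n. if x' = x0 then dsign n x x0 * dsign m z y else 0)"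
    using assms(2)
    by (intro sum.cong refl)
       (simp add: basis_state_def if_distrib[of "\<lambda>t. _ * t"] cong: if_cong)
  then show ?thesis
    using assms(1) by (simp add: H_all_def)
qed

lemma gpk_state_eq_walsh_coeff:
  assumes "i < m"
  shows "gpk_state n m f (2 ^ i) (d, z) = of_real
     (bsign (bit z i) * walsh_coeff n (\<lambda>x. bit (f x) i) d / (sqrt (2 ^ (n + m)) * sqrt (2 ^ n)))"
proof -
  have phase_kickback: "walsh_char m (xor z (f x)) (2 ^ i) = bsign (bit z i) * bsign (bit (f x) i)" for x
    using assms by (simp add: walsh_char_def bdot_exp bsign_def bit_xor_iff)
  have "(2::nat) ^ i < 2 ^ m"
    using assms by simp
  then have "gpk_state n m f (2 ^ i) (d, z) = (\<Sum>x<2 ^ n. of_real (walsh_char n d x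
      * (bsign (bit z i) * bsign (bit (f x) i)) / (sqrt (2 ^ (n + m)) * sqrt (2 ^ n))))"
    unfolding gpk_state_def H_first_def U_f_def
    by (simp add: H_all_basis_state dsign_eq_walsh_char
        phase_kickback sum_divide_distrib mult_ac)
  also have "\<dots> = of_real
     (bsign (bit z i) * walsh_coeff n (\<lambda>x. bit (f x) i) d / (sqrt (2 ^ (n + m)) * sqrt (2 ^ n)))"
    by (simp add: walsh_coeff_def sum_distrib_left sum_divide_distrib mult_ac)
  finally show ?thesis .
qed

lemma gpk_prob_eq_walsh_coeff:
  assumes "i < m"
  shows "gpk_prob n m f (2 ^ i) d = (walsh_coeff n (\<lambda>x. bit (f x) i) d)\<^sup>2 / 4 ^ n"
proof -
  have "(2::real) ^ (n + m) * 2 ^ n = 2 ^ m * 4 ^ n"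
    by (simp add: power_add power_mult_distrib[symmetric] mult_ac)
  then show ?thesis
    unfolding gpk_prob_def gpk_state_eq_walsh_coeff[OF assms] norm_of_real power2_abs
    by (simp add: power_divide power_mult_distrib)
qed

lemma sum_gpk_prob:
  assumes "i < m"
  shows "(\<Sum>d<2 ^ n. gpk_prob n m f (2 ^ i) d) = 1"
  using walsh_parseval[of n "\<lambda>x. bsign (bit (f x) i)"]
  by (simp add: gpk_prob_eq_walsh_coeff[OF assms] walsh_coeff_def power_mult_distrib[symmetric]
      flip: sum_divide_distrib)

lemma gpk_event_eq_sum: "gpk_event n m f y P = (\<Sum>d<2 ^ n. if P d then gpk_prob n m f y d else 0)"
proof -
  have "{d. d < 2 ^ n \<and> P d} = {d \<in> {..<2 ^ n}. P d}"
    by auto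
  then show ?thesis
    unfolding gpk_event_def by (simp add: sum.inter_filter[symmetric])
qed

lemma gpk_event_add_compl:
  assumes "i < m"
  shows "gpk_event n m f (2 ^ i) P + gpk_event n m f (2 ^ i) (\<lambda>d. \<not> P d) = 1"
proof -
  have pointwise: "(\<lambda>d. (if P d then gpk_prob n m f (2 ^ i) d else 0)
      + (if \<not> P d then gpk_prob n m f (2 ^ i) d else 0)) = gpk_prob n m f (2 ^ i)"
    by auto
  show ?thesis
    unfolding gpk_event_eq_sum sum.distrib[symmetric] pointwise by (rule sum_gpk_prob[OF assms])
qed

lemma gpk_event_eq_zero: "gpk_event n m f y (\<lambda>d. d = 0) = gpk_prob n m f y 0"
proof -
  have "{d::nat. d < 2 ^ n \<and> d = 0} = {0}"
    by auto
  then show ?thesis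
    by (simp add: gpk_event_def)
qed

lemma gpk_event_zero_if_component_constant:
  assumes "i < m" and "\<forall>x<2 ^ n. bit (f x) i = b"
  shows "gpk_event n m f (2 ^ i) (\<lambda>d. d = 0) = 1"
proof -
  have "{x. x < 2 ^ n \<and> bit (f x) i} = (if b then {..<2 ^ n} else {})"
    using assms(2) by auto
  then have "(walsh_coeff n (\<lambda>x. bit (f x) i) 0)\<^sup>2 = 4 ^ n"
    by (simp add: walsh_coeff_zero power2_eq_square flip: power_mult_distrib)
  then show ?thesis
    by (simp add: gpk_event_eq_zero gpk_prob_eq_walsh_coeff[OF assms(1)])
qed

lemma gpk_event_nonzero_if_component_balanced:
  assumes "i < m" and "2 * card {x. x < 2 ^ n \<and> bit (f x) i} = 2 ^ n"
  shows "gpk_event n m f (2 ^ i) (\<lambda>d. d \<noteq> 0) = 1"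
proof -
  have "walsh_coeff n (\<lambda>x. bit (f x) i) 0 = 0"
    unfolding walsh_coeff_zero using arg_cong[OF assms(2), of real] by simp
  then have "gpk_event n m f (2 ^ i) (\<lambda>d. d = 0) = 0"
    by (simp add: gpk_event_eq_zero gpk_prob_eq_walsh_coeff[OF assms(1)])
  then show ?thesis
    using gpk_event_add_compl[OF assms(1), of n f "\<lambda>d. d = 0"] by simp
qed

lemma is_constant_eq_at_0:
  assumes "is_constant n f" and "x < 2 ^ n"
  shows "f x = f 0"
proof -
  have "(0::nat) < 2 ^ n"
    by simp
  then show ?thesis
    using assms unfolding is_constant_def by blast
qed

lemma gpk_event_zero_if_is_constant:
  assumes "is_constant n f" and "i < m"
  shows "gpk_event n m f (2 ^ i) (\<lambda>d. d = 0) = 1"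
proof (rule gpk_event_zero_if_component_constant[OF assms(2)], intro allI impI)
  fix x :: nat assume "x < 2 ^ n"
  show "bit (f x) i = bit (f 0) i"
    using is_constant_eq_at_0[OF assms(1) \<open>x < 2 ^ n\<close>] by (rule arg_cong)
qed

lemma gpk_event_balanced_with:
  assumes "balanced_with n f a b" and "i < m"
  shows "gpk_event n m f (2 ^ i) (\<lambda>d. (d \<noteq> 0) = bit (xor a b) i) = 1"
proof (cases "bit a i = bit b i")
  case True
  have "\<forall>x<2 ^ n. f x \<in> {a, b}"
    using assms(1) by (auto simp: balanced_with_def)
  then have "\<forall>x<2 ^ n. bit (f x) i = bit a i"
    using True by auto
  then show ?thesis
    using gpk_event_zero_if_component_constant[OF assms(2)] True by (simp add: bit_xor_iff)
next
  case False
  have "{x. x < 2 ^ n \<and> bit (f x) i} = {x. x < 2 ^ n \<and> f x = (if bit a i then a else b)}"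
    using assms(1) False by (auto simp: balanced_with_def)
  then have "2 * card {x. x < 2 ^ n \<and> bit (f x) i} = 2 ^ n"
    using assms(1) by (simp add: balanced_with_def)
  then show ?thesis
    using gpk_event_nonzero_if_component_balanced[OF assms(2)] False by (simp add: bit_xor_iff)
qed

lemma gpk_certain_bits_unique:
  fixes lam mu :: nat
  assumes "lam < 2 ^ m" and "mu < 2 ^ m"
    and lam_runs: "\<forall>i<m. gpk_event n m f (2 ^ i) (\<lambda>d. (d \<noteq> 0) = bit lam i) = 1"
    and mu_runs: "\<forall>i<m. gpk_event n m f (2 ^ i) (\<lambda>d. (d \<noteq> 0) = bit mu i) = 1"
  shows "lam = mu"
proof (rule nat_eq_of_low_bits_eq[OF assms(1,2)], intro allI impI)
  fix i assume i: "i < m"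
  show "bit lam i = bit mu i"
  proof (rule ccontr)
    assume "bit lam i \<noteq> bit mu i"
    then have "gpk_event n m f (2 ^ i) (\<lambda>d. \<not> ((d \<noteq> 0) = bit lam i))
        = gpk_event n m f (2 ^ i) (\<lambda>d. (d \<noteq> 0) = bit mu i)"
      by (intro arg_cong[where f = "gpk_event n m f (2 ^ i)"]) auto
    moreover have "gpk_event n m f (2 ^ i) (\<lambda>d. (d \<noteq> 0) = bit lam i) = 1"
      "gpk_event n m f (2 ^ i) (\<lambda>d. (d \<noteq> 0) = bit mu i) = 1"
      using lam_runs mu_runs i by blast+
    ultimately show False
      using gpk_event_add_compl[OF i, of n f "\<lambda>d. (d \<noteq> 0) = bit lam i"] by linarith
  qed
qed

lemma gpk_decoded_eq_0_if_is_constant: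
  fixes lam :: nat
  assumes "is_constant n f" and "lam < 2 ^ m"
    and "\<forall>i<m. gpk_event n m f (2 ^ i) (\<lambda>d. (d \<noteq> 0) = bit lam i) = 1"
  shows "lam = 0"
proof (rule gpk_certain_bits_unique[OF assms(2) _ assms(3)])
  show "\<forall>i<m. gpk_event n m f (2 ^ i) (\<lambda>d. (d \<noteq> 0) = bit (0::nat) i) = 1"
    using gpk_event_zero_if_is_constant[OF assms(1)] by simp
qed simp

lemma gpk_decoded_eq_xor_if_balanced_with:
  fixes lam :: nat
  assumes "balanced_with n f a b" and "\<forall>x<2 ^ n. f x < 2 ^ m" and "lam < 2 ^ m"
    and "\<forall>i<m. gpk_event n m f (2 ^ i) (\<lambda>d. (d \<noteq> 0) = bit lam i) = 1"
  shows "lam = xor a b"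
proof (rule gpk_certain_bits_unique[OF assms(3) _ assms(4)])
  have "a \<in> f ` {..<2 ^ n}" "b \<in> f ` {..<2 ^ n}"
    using assms(1) by (simp_all add: balanced_with_def)
  then show "xor a b < 2 ^ m"
    using assms(2) by (auto intro: xor_less_exp)
  show "\<forall>i<m. gpk_event n m f (2 ^ i) (\<lambda>d. (d \<noteq> 0) = bit (xor a b) i) = 1"
    using gpk_event_balanced_with[OF assms(1)] by blast
qed

lemma is_constant_image:
  assumes "is_constant n f"
  shows "f ` {..<2 ^ n} = {f 0}"
proof -
  have "f ` {..<2 ^ n} \<subseteq> {f 0}"
    using is_constant_eq_at_0[OF assms] by blast
  moreover have "f 0 \<in> f ` {..<2 ^ n}"
    by simp
  ultimately show ?thesis
    by blast
qed

lemma balanced_with_image: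
  assumes "balanced_with n f a b"
  shows "f ` {..<2 ^ n} = {f 0, xor (f 0) (xor a b)}"
proof -
  have image: "f ` {..<2 ^ n} = {a, b}"
    using assms by (simp add: balanced_with_def)
  then have "f 0 \<in> {a, b}"
    by (metis image_eqI lessThan_iff zero_less_numeral zero_less_power)
  moreover have "xor a (xor a b) = b" "xor b (xor a b) = a"
    by (auto intro!: bit_eqI simp: bit_xor_iff)
  ultimately show ?thesis
    using image by auto
qed

theorem corollary3p5:
  fixes n m :: nat and f :: "nat \<Rightarrow> nat"
  assumes range: "\<forall>x<2^n. f x < 2^m"
    and cb: "is_constant n f \<or> is_balanced n f"
  shows "(is_constant n f \<longrightarrow>
            (\<forall>i<m. gpk_event n m f (2^i) (\<lambda>\<delta>. \<delta> = 0) = 1))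
       \<and> (\<forall>f1 f2. balanced_with n f f1 f2 \<longrightarrow>
            (\<forall>i<m. gpk_event n m f (2^i) (\<lambda>\<delta>. (\<delta> \<noteq> 0) = bit (xor f1 f2) i) = 1))
       \<and> (\<forall>lam<2^m. (\<forall>i<m. gpk_event n m f (2^i) (\<lambda>\<delta>. (\<delta> \<noteq> 0) = bit lam i) = 1) \<longrightarrow>
            f ` {..<2^n} = {f 0, xor (f 0) lam})"
proof -
  have "f ` {..<2 ^ n} = {f 0, xor (f 0) lam}"
    if "lam < 2 ^ m" and "\<forall>i<m. gpk_event n m f (2 ^ i) (\<lambda>\<delta>. (\<delta> \<noteq> 0) = bit lam i) = 1"
    for lam
    using cb
  proof
    assume "is_constant n f"
    then show ?thesis
      using gpk_decoded_eq_0_if_is_constant[OF _ that] is_constant_image by simp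
  next
    assume "is_balanced n f"
    then obtain a b where ab: "balanced_with n f a b"
      by (auto simp: is_balanced_def)
    then show ?thesis
      using gpk_decoded_eq_xor_if_balanced_with[OF ab range that] balanced_with_image by simp
  qed
  then show ?thesis
    using gpk_event_zero_if_is_constant gpk_event_balanced_with by (intro conjI impI allI) auto
qed

end
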